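(* Let $\alpha>1$ and let $L_2(\alpha)=\{\alpha^n : n\in\mathbb{N}_0\}^2\subseteq\mathbb{R}^2$. Then \[h(L_2(\alpha))\le 2\left\lceil\log_{\alpha}\left(\frac{\alpha}{\alpha-1}\right)\right\rceil+3.\]
   Context: For a set $S\subseteq\mathbb{R}^d$, the Helly number $h(S)$ is the smallest $h$ such that the following holds: for every finite family $\mathcal{F}$ of convex sets in $\mathbb{R}^d$, if every $h$ or fewer sets of $\mathcal{F}$ have a point of $S$ in their intersection, then the intersection of all sets of $\mathcal{F}$ contains a point of $S$. If no such $h$ exists, $h(S)=\infty$. Here $\mathbb{N}_0=\{0,1,2,\dots\}$. *)

theory Defs
  imports "HOL-Analysis.Analysis" "HOL-Library.Extended_Nat"
begin

definition helly_prop :: "'a::real_vector set \<Rightarrow> nat \<Rightarrow> bool" where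
  "helly_prop S h \<longleftrightarrow>
     (\<forall>F :: 'a set set. finite F \<and> (\<forall>C\<in>F. convex C) \<and>
        (\<forall>G\<subseteq>F. card G \<le> h \<longrightarrow> \<Inter>G \<inter> S \<noteq> {})
        \<longrightarrow> \<Inter>F \<inter> S \<noteq> {})"

definition helly_number :: "'a::real_vector set \<Rightarrow> enat" where
  "helly_number S = (if \<exists>h. helly_prop S h then enat (LEAST h. helly_prop S h) else \<infinity>)"

definition L2 :: "real \<Rightarrow> (real \<times> real) set" where
  "L2 \<alpha> = {(\<alpha> ^ m, \<alpha> ^ n) | m n :: nat. True}"

end

theory Submission
  imports Defs
begin

text \<open>
  For a set \<open>S\<close> that meets every bounded set in finitely many points, a Doignon-type argument
  bounds the Helly number by the largest size of an empty polytope, i.e. of a finite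
  \<open>Y \<subseteq> S\<close> in convex position whose convex hull meets \<open>S\<close> only in \<open>Y\<close>.

  For \<open>L\<^sub>2(\<alpha>)\<close> write \<open>Y = pt ` W\<close> with \<open>pt (m, n) = (\<alpha>^m, \<alpha>^n)\<close>. Among the four corners of
  the bounding box of \<open>W\<close>, either the top-left and bottom-right ones lie in \<open>W\<close>, or the
  bottom-left and top-right ones do. In the first case the chord joining the two corners sorts
  the remaining points: besides at most one neighbour of each corner, the points above the
  chord lie in distinct rows, and so do those below it, except for at most one point next to
  the right edge. The rows \<open>n\<close> that occur satisfy \<open>(\<alpha> - 1) K < c \<alpha>^(n+1) \<le> K\<close> for constants
  \<open>c, K\<close> of the chord, so there are fewer than \<open>k\<close> of them once \<open>\<alpha>/(\<alpha> - 1) \<le> \<alpha>^k\<close>; this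
  gives \<open>2k + 3\<close>. In the second case, unless the box is a square (then \<open>W\<close> has at most four
  points), \<open>W\<close> lies in a strip of slope one (after swapping the coordinates if necessary), and
  the perspective map \<open>(x, y) \<mapsto> (\<kappa> x / y, c / y)\<close>, which acts on exponents as a shear, carries
  it to the first case.
\<close>

section \<open>Helly numbers of discrete sets\<close>

lemma critical_subfamily:
  assumes "finite F" and "\<Inter>F \<inter> S = {}" and "\<forall>G\<subseteq>F. card G \<le> h \<longrightarrow> \<Inter>G \<inter> S \<noteq> {}"
  obtains F' where "F' \<subseteq> F" "h < card F'" "\<Inter>F' \<inter> S = {}"
    "\<And>C. C \<in> F' \<Longrightarrow> \<Inter>(F' - {C}) \<inter> S \<noteq> {}"
proof -
  obtain F' where F': "F' \<subseteq> F" "\<Inter>F' \<inter> S = {}"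
    and least: "\<And>G. G \<subseteq> F \<and> \<Inter>G \<inter> S = {} \<Longrightarrow> card F' \<le> card G"
    using ex_has_least_nat[of "\<lambda>G. G \<subseteq> F \<and> \<Inter>G \<inter> S = {}" F card] assms(2) by blast
  have "finite F'"
    using F'(1) assms(1) finite_subset by blast
  show thesis
  proof
    show "h < card F'"
      using F' assms(3) by (meson not_le)
    show "\<Inter>(F' - {C}) \<inter> S \<noteq> {}" if "C \<in> F'" for C
      using least[of "F' - {C}"] F' card_Diff1_less[OF \<open>finite F'\<close> that] by auto
  qed (use F' in auto)
qed

lemma convex_hull_insert_halfspace_eq:
  fixes a :: "'a::real_inner"
  assumes below: "\<forall>w\<in>A. inner a w < c" and "inner a y \<le> c"
    and z: "z \<in> convex hull (insert y A)" and "c \<le> inner a z"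
  shows "z = y"
proof (cases "A = {}")
  case True
  then show ?thesis using z by simp
next
  case False
  then obtain u v q where uv: "0 \<le> u" "0 \<le> v" "u + v = 1" "q \<in> convex hull A"
    and zq: "z = u *\<^sub>R y + v *\<^sub>R q"
    using z by (auto simp: convex_hull_insert)
  have "convex hull A \<subseteq> {w. inner a w < c}"
    using below by (intro hull_minimal convex_halfspace_lt) auto
  then have q: "inner a q < c"
    using uv(4) by auto
  have "v = 0"
  proof (rule ccontr)
    assume "v \<noteq> 0"
    then have "v * inner a q < v * c"
      using q uv(2) by simp
    moreover have "u * inner a y \<le> u * c"
      using assms(2) uv(1) by (simp add: mult_left_mono)
    ultimately have "inner a z < (u + v) * c"
      by (simp add: zq inner_add_right distrib_right)
    then show False
      using uv(3) assms(4) by simp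
  qed
  then show ?thesis
    using uv(3) zq by simp
qed

lemma raise_threshold:
  fixes a :: "'i \<Rightarrow> 'a::real_inner"
  assumes "finite T" "i \<in> I"
    and cover: "\<forall>z\<in>T. \<exists>j\<in>I. c j \<le> inner (a j) z"
    and "\<exists>y\<in>T. \<forall>j\<in>I - {i}. inner (a j) y < c j"
  obtains y where "y \<in> T" "\<forall>j\<in>I - {i}. inner (a j) y < c j" "c i \<le> inner (a i) y"
    "\<forall>z\<in>T. \<exists>j\<in>I. (c(i := inner (a i) y)) j \<le> inner (a j) z"
proof -
  define Y where "Y = {y\<in>T. \<forall>j\<in>I - {i}. inner (a j) y < c j}"
  have "finite Y" "Y \<noteq> {}"
    using assms(1,4) by (auto simp: Y_def)
  then obtain y where y: "y \<in> Y" and least: "\<And>y'. y' \<in> Y \<Longrightarrow> inner (a i) y \<le> inner (a i) y'"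
    using Min_in[of "(\<lambda>y. inner (a i) y) ` Y"] Min_le[of "(\<lambda>y. inner (a i) y) ` Y"] by fastforce
  have only_i: "c i \<le> inner (a i) y'" if "y' \<in> Y" for y'
  proof -
    obtain j where "j \<in> I" "c j \<le> inner (a j) y'"
      using cover \<open>y' \<in> Y\<close> unfolding Y_def by blast
    moreover have "j = i"
      using calculation \<open>y' \<in> Y\<close> unfolding Y_def by (force simp: not_less[symmetric])
    ultimately show ?thesis by simp
  qed
  have "\<exists>j\<in>I. (c(i := inner (a i) y)) j \<le> inner (a j) z" if "z \<in> T" for z
  proof (cases "z \<in> Y")
    case True
    then show ?thesis
      using least assms(2) by auto
  next
    case False
    then show ?thesis
      using \<open>z \<in> T\<close> by (force simp: Y_def not_less)
  qed
  then show thesis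
    using that y only_i[OF y] by (auto simp: Y_def)
qed

text \<open>Raising every threshold as far as the cover allows makes each halfspace touch a point
  that no other halfspace contains.\<close>

lemma tight_halfspace_cover:
  fixes a :: "'i \<Rightarrow> 'a::real_inner"
  assumes "finite T" "finite I"
    and cover: "\<forall>z\<in>T. \<exists>i\<in>I. b i \<le> inner (a i) z"
    and irredundant: "\<forall>i\<in>I. \<exists>y\<in>T. \<forall>j\<in>I - {i}. inner (a j) y < b j"
  obtains c where "\<forall>z\<in>T. \<exists>i\<in>I. c i \<le> inner (a i) z"
    "\<forall>i\<in>I. \<exists>y\<in>T. inner (a i) y = c i \<and> (\<forall>j\<in>I - {i}. inner (a j) y < c j)"
proof -
  define D where "D i = insert (b i) ((\<lambda>y. inner (a i) y) ` T)" for i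
  define Feas where "Feas = {c \<in> PiE I D. (\<forall>i\<in>I. b i \<le> c i) \<and> (\<forall>z\<in>T. \<exists>i\<in>I. c i \<le> inner (a i) z)}"
  have "finite (PiE I D)"
    using assms(1,2) by (intro finite_PiE) (auto simp: D_def)
  then have "finite Feas"
    by (rule finite_subset[rotated]) (auto simp: Feas_def)
  moreover have "restrict b I \<in> Feas"
    using cover by (auto simp: Feas_def D_def)
  ultimately obtain c where c: "c \<in> Feas" and cmax: "\<And>c'. c' \<in> Feas \<Longrightarrow> sum c' I \<le> sum c I"
    using Max_in[of "(\<lambda>c. sum c I) ` Feas"] Max_ge[of "(\<lambda>c. sum c I) ` Feas"] by fastforce
  have cD: "c \<in> PiE I D" and cb: "\<forall>i\<in>I. b i \<le> c i"
    and c_cover: "\<forall>z\<in>T. \<exists>i\<in>I. c i \<le> inner (a i) z"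
    using c by (auto simp: Feas_def)
  have "\<exists>y\<in>T. inner (a i) y = c i \<and> (\<forall>j\<in>I - {i}. inner (a j) y < c j)" if i: "i \<in> I" for i
  proof -
    have "\<exists>y\<in>T. \<forall>j\<in>I - {i}. inner (a j) y < c j"
      using irredundant i cb by (meson DiffD1 order.strict_trans2)
    then obtain y where y: "y \<in> T" "\<forall>j\<in>I - {i}. inner (a j) y < c j" "c i \<le> inner (a i) y"
      and raised: "\<forall>z\<in>T. \<exists>j\<in>I. (c(i := inner (a i) y)) j \<le> inner (a j) z"
      using raise_threshold[OF assms(1) i c_cover] by blast
    have "c(i := inner (a i) y) \<in> Feas"
      using cD cb raised i y by (auto simp: Feas_def D_def PiE_def extensional_def)
    then have "sum (c(i := inner (a i) y)) I \<le> sum c I"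
      by (rule cmax)
    then have "inner (a i) y \<le> c i"
      using assms(2) i by (simp add: sum.remove)
    then show ?thesis
      using y by force
  qed
  then show thesis
    using that c_cover by blast
qed

lemma empty_polytope_of_halfspace_cover:
  fixes a :: "'i \<Rightarrow> 'a::real_inner"
  assumes "finite T" "finite I"
    and "\<forall>z\<in>T. \<exists>i\<in>I. b i \<le> inner (a i) z"
    and "\<forall>i\<in>I. \<exists>y\<in>T. \<forall>j\<in>I - {i}. inner (a j) y < b j"
  obtains Y where "Y \<subseteq> T" "card Y = card I" "\<forall>y\<in>Y. y \<notin> convex hull (Y - {y})"
    "convex hull Y \<inter> T \<subseteq> Y"
proof -
  obtain c where cover: "\<forall>z\<in>T. \<exists>i\<in>I. c i \<le> inner (a i) z"
    and "\<forall>i\<in>I. \<exists>y\<in>T. inner (a i) y = c i \<and> (\<forall>j\<in>I - {i}. inner (a j) y < c j)"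
    using tight_halfspace_cover[OF assms] by blast
  then obtain y where y: "\<And>i. i \<in> I \<Longrightarrow> y i \<in> T"
    and on: "\<And>i. i \<in> I \<Longrightarrow> inner (a i) (y i) = c i"
    and off: "\<And>i j. i \<in> I \<Longrightarrow> j \<in> I - {i} \<Longrightarrow> inner (a j) (y i) < c j"
    by metis
  have "inj_on y I"
    by (rule inj_onI) (metis DiffI less_irrefl off on singletonD)
  have below: "\<forall>w\<in>y ` I - {y i}. inner (a i) w < c i" if "i \<in> I" for i
    using off that by auto
  show thesis
  proof
    show "y ` I \<subseteq> T" "card (y ` I) = card I"
      using y card_image[OF \<open>inj_on y I\<close>] by auto
    show "\<forall>v\<in>y ` I. v \<notin> convex hull (y ` I - {v})"
    proof clarify
      fix i assume i: "i \<in> I" and "y i \<in> convex hull (y ` I - {y i})"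
      moreover have "convex hull (y ` I - {y i}) \<subseteq> {w. inner (a i) w < c i}"
        using below[OF i] by (intro hull_minimal convex_halfspace_lt) auto
      ultimately show False
        using on[OF i] by auto
    qed
    show "convex hull (y ` I) \<inter> T \<subseteq> y ` I"
    proof clarify
      fix z assume z: "z \<in> convex hull (y ` I)" "z \<in> T"
      then obtain i where i: "i \<in> I" "c i \<le> inner (a i) z"
        using cover by blast
      have "z \<in> convex hull (insert (y i) (y ` I - {y i}))"
        using z(1) i(1) by (simp add: insert_absorb)
      then have "z = y i"
        using convex_hull_insert_halfspace_eq[OF below[OF i(1)]] on i by simp
      then show "z \<in> y ` I"
        using i(1) by simp
    qed
  qed
qed

lemma separating_halfspaces:
  fixes X :: "'a::euclidean_space set"
  assumes "finite X" and "\<forall>t\<in>T. \<exists>x\<in>X. t \<notin> convex hull (X - {x})"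
  obtains x a b where "\<And>t. t \<in> T \<Longrightarrow> x t \<in> X" "\<And>t. t \<in> T \<Longrightarrow> b t \<le> inner (a t) t"
    "\<And>t z. t \<in> T \<Longrightarrow> z \<in> X - {x t} \<Longrightarrow> inner (a t) z < b t"
proof -
  have "\<exists>x a b. x \<in> X \<and> b \<le> inner a t \<and> (\<forall>z\<in>X - {x}. inner a z < b)" if "t \<in> T" for t
  proof -
    obtain x where x: "x \<in> X" "t \<notin> convex hull (X - {x})"
      using assms(2) \<open>t \<in> T\<close> by blast
    have "closed (convex hull (X - {x}))"
      using assms(1) by (simp add: compact_imp_closed finite_imp_compact_convex_hull)
    then obtain a b where "inner a t < b" "\<forall>z\<in>convex hull (X - {x}). b < inner a z"
      using separating_hyperplane_closed_point[OF convex_convex_hull _ x(2)] by blast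
    then have "- b \<le> inner (- a) t" "\<forall>z\<in>X - {x}. inner (- a) z < - b"
      by (auto simp: hull_inc)
    then show ?thesis
      using x(1) by blast
  qed
  then show thesis
    using that by metis
qed

lemma irredundant_subcover:
  assumes "finite J" and "T \<subseteq> (\<Union>j\<in>J. H j)"
  obtains I where "I \<subseteq> J" "T \<subseteq> (\<Union>i\<in>I. H i)" "\<And>i. i \<in> I \<Longrightarrow> \<exists>y\<in>T. y \<notin> (\<Union>j\<in>I - {i}. H j)"
proof -
  obtain I where I: "I \<subseteq> J \<and> T \<subseteq> (\<Union>i\<in>I. H i)"
    and least: "\<And>I'. I' \<subseteq> J \<and> T \<subseteq> (\<Union>i\<in>I'. H i) \<Longrightarrow> card I \<le> card I'"
    using ex_has_least_nat[of "\<lambda>I. I \<subseteq> J \<and> T \<subseteq> (\<Union>i\<in>I. H i)" J card] assms(2) by blast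
  have "finite I"
    using I assms(1) finite_subset by blast
  have irredundant: "\<exists>y\<in>T. y \<notin> (\<Union>j\<in>I - {i}. H j)" if "i \<in> I" for i
  proof (rule ccontr)
    assume "\<not> ?thesis"
    then have "card I \<le> card (I - {i})"
      using least[of "I - {i}"] I by blast
    then show False
      using card_Diff1_less[OF \<open>finite I\<close> that] by simp
  qed
  show thesis
    using I irredundant by (intro that[of I]) auto
qed

lemma empty_polytope_of_empty_core:
  fixes X S :: "'a::euclidean_space set"
  assumes "finite X" "X \<subseteq> S" "finite (S \<inter> convex hull X)"
    and core: "\<forall>t\<in>S \<inter> convex hull X. \<exists>x\<in>X. t \<notin> convex hull (X - {x})"
  obtains Y where "Y \<subseteq> S \<inter> convex hull X" "card X \<le> card Y"
    "\<forall>y\<in>Y. y \<notin> convex hull (Y - {y})" "convex hull Y \<inter> S \<subseteq> Y"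
proof -
  define T where "T = S \<inter> convex hull X"
  obtain x a b where x: "\<And>t. t \<in> T \<Longrightarrow> x t \<in> X" and sep: "\<And>t. t \<in> T \<Longrightarrow> b t \<le> inner (a t) t"
    and off: "\<And>t z. t \<in> T \<Longrightarrow> z \<in> X - {x t} \<Longrightarrow> inner (a t) z < b t"
    using separating_halfspaces[OF assms(1)] core unfolding T_def by metis
  have "finite T"
    using assms(3) by (simp add: T_def)
  moreover have "T \<subseteq> (\<Union>t\<in>T. {z. b t \<le> inner (a t) z})"
    using sep by blast
  ultimately obtain I where I: "I \<subseteq> T" "T \<subseteq> (\<Union>t\<in>I. {z. b t \<le> inner (a t) z})"
    and irredundant: "\<And>t. t \<in> I \<Longrightarrow> \<exists>y\<in>T. y \<notin> (\<Union>s\<in>I - {t}. {z. b s \<le> inner (a s) z})"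
    by (rule irredundant_subcover) blast
  have "finite I"
    using I(1) \<open>finite T\<close> finite_subset by blast
  have "X \<subseteq> x ` I"
  proof
    fix z assume "z \<in> X"
    then have "z \<in> T"
      using assms(2) by (auto simp: T_def hull_inc)
    then obtain t where "t \<in> I" "b t \<le> inner (a t) z"
      using I(2) by blast
    then show "z \<in> x ` I"
      using off[of t z] I(1) \<open>z \<in> X\<close> by force
  qed
  then have "card X \<le> card I"
    using \<open>finite I\<close> surj_card_le by blast
  obtain Y where Y: "Y \<subseteq> T" "card Y = card I" "\<forall>y\<in>Y. y \<notin> convex hull (Y - {y})"
    "convex hull Y \<inter> T \<subseteq> Y"
  proof (rule empty_polytope_of_halfspace_cover[OF \<open>finite T\<close> \<open>finite I\<close>])
    show "\<forall>z\<in>T. \<exists>t\<in>I. b t \<le> inner (a t) z"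
      using I(2) by blast
    show "\<forall>t\<in>I. \<exists>y\<in>T. \<forall>s\<in>I - {t}. inner (a s) y < b s"
      using irredundant by (force simp: not_le)
  qed
  have "convex hull Y \<subseteq> convex hull X"
    using Y(1) by (intro hull_minimal) (auto simp: T_def)
  then have "convex hull Y \<inter> S \<subseteq> Y"
    using Y(4) by (auto simp: T_def)
  then show thesis
    using that Y \<open>card X \<le> card I\<close> by (simp add: T_def)
qed

lemma helly_prop_if_empty_polytopes_bounded:
  fixes S :: "'a::euclidean_space set"
  assumes discrete: "\<And>X. finite X \<Longrightarrow> finite (S \<inter> convex hull X)"
    and bounded: "\<And>Y. finite Y \<Longrightarrow> Y \<subseteq> S \<Longrightarrow> \<forall>y\<in>Y. y \<notin> convex hull (Y - {y}) \<Longrightarrow>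
      convex hull Y \<inter> S \<subseteq> Y \<Longrightarrow> card Y \<le> h"
  shows "helly_prop S h"
  unfolding helly_prop_def
proof (intro allI impI notI, elim conjE)
  fix F :: "'a set set"
  assume "finite F" and convex: "\<forall>C\<in>F. convex C"
    and small: "\<forall>G\<subseteq>F. card G \<le> h \<longrightarrow> \<Inter>G \<inter> S \<noteq> {}" and "\<Inter>F \<inter> S = {}"
  then obtain F' where F': "F' \<subseteq> F" "h < card F'" "\<Inter>F' \<inter> S = {}"
    and critical: "\<And>C. C \<in> F' \<Longrightarrow> \<Inter>(F' - {C}) \<inter> S \<noteq> {}"
    using critical_subfamily by metis
  have "\<forall>C\<in>F'. \<exists>y. y \<in> \<Inter>(F' - {C}) \<inter> S"
    using critical by blast
  then obtain x where x: "\<And>C. C \<in> F' \<Longrightarrow> x C \<in> \<Inter>(F' - {C}) \<inter> S"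
    by (metis bchoice)
  have x_notin: "x C \<notin> C" if "C \<in> F'" for C
    using x[OF that] F'(3) that by blast
  have "inj_on x F'"
    by (rule inj_onI) (metis x_notin x DiffI IntD1 InterE singletonD)
  define X where "X = x ` F'"
  have "finite F'"
    using F'(1) \<open>finite F\<close> finite_subset by blast
  then have "finite X" "X \<subseteq> S" "card X = card F'"
    using x card_image[OF \<open>inj_on x F'\<close>] by (auto simp: X_def)
  have "convex hull (X - {x C}) \<subseteq> C" if "C \<in> F'" for C
    using x convex F'(1) that by (intro hull_minimal) (auto simp: X_def)
  then have core: "\<forall>t\<in>S \<inter> convex hull X. \<exists>z\<in>X. t \<notin> convex hull (X - {z})"
    using F'(3) unfolding X_def by blast
  obtain Y where "Y \<subseteq> S \<inter> convex hull X" "card X \<le> card Y"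
    "\<forall>y\<in>Y. y \<notin> convex hull (Y - {y})" "convex hull Y \<inter> S \<subseteq> Y"
    using empty_polytope_of_empty_core[OF \<open>finite X\<close> \<open>X \<subseteq> S\<close> discrete[OF \<open>finite X\<close>] core] .
  moreover have "finite Y"
    using calculation(1) discrete[OF \<open>finite X\<close>] finite_subset by blast
  ultimately show False
    using bounded[of Y] F'(2) \<open>card X = card F'\<close> by simp
qed

lemma helly_number_le: "helly_prop S h \<Longrightarrow> helly_number S \<le> enat h"
  unfolding helly_number_def by (auto intro: Least_le)

section \<open>Segments and convex hulls in the plane\<close>

lemma horizontal_closed_segment_iff:
  "(x, y) \<in> closed_segment (a, y) (b, y) \<longleftrightarrow> x \<in> closed_segment a b"
  by (auto simp: in_segment algebra_simps)

lemma vertical_closed_segment_iff: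
  "(x, y) \<in> closed_segment (x, a) (x, b) \<longleftrightarrow> y \<in> closed_segment a b"
  by (auto simp: in_segment algebra_simps)

lemma Pair_mem_horizontal_segment:
  "(a::real) \<le> x \<Longrightarrow> x \<le> b \<Longrightarrow> (x, y) \<in> closed_segment (a, y) (b, y)"
  by (simp add: horizontal_closed_segment_iff closed_segment_eq_real_ivl)

lemma Pair_mem_vertical_segment:
  "(a::real) \<le> y \<Longrightarrow> y \<le> b \<Longrightarrow> (x, y) \<in> closed_segment (x, a) (x, b)"
  by (simp add: vertical_closed_segment_iff closed_segment_eq_real_ivl)

lemma closed_segment_real_bounds:
  "x \<in> closed_segment a b \<Longrightarrow> min a b \<le> x \<and> x \<le> max a (b::real)"
  by (auto simp: closed_segment_eq_real_ivl split: if_splits)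

lemma linear_image_mem_closed_segment:
  "linear f \<Longrightarrow> e \<in> closed_segment p q \<Longrightarrow> f e \<in> closed_segment (f p) (f q)"
  by (simp add: closed_segment_linear_image)

lemma closed_segment_meets_level:
  assumes "linear f" and "c \<in> closed_segment (f p) (f q)"
  obtains e where "e \<in> closed_segment p q" "f e = c"
  using assms by (auto simp: closed_segment_linear_image)

lemma linear_fst: "linear fst" and linear_snd: "linear snd"
  by (simp_all add: linear_iff)

lemma mem_convex_hull_quadrants:
  fixes s a b c d :: "real \<times> real"
  assumes "fst s \<le> fst a" "snd s \<le> snd a" "fst b \<le> fst s" "snd s \<le> snd b"
    "fst c \<le> fst s" "snd c \<le> snd s" "fst s \<le> fst d" "snd d \<le> snd s"
  shows "s \<in> convex hull {a, b, c, d}"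
proof -
  have "snd s \<in> closed_segment (snd b) (snd c)" "snd s \<in> closed_segment (snd a) (snd d)"
    using assms by (auto simp: closed_segment_eq_real_ivl)
  then obtain e e' where e: "e \<in> closed_segment b c" "snd e = snd s"
    and e': "e' \<in> closed_segment a d" "snd e' = snd s"
    by (metis closed_segment_meets_level[OF linear_snd])
  have "fst e \<le> fst s" "fst s \<le> fst e'"
    using linear_image_mem_closed_segment[OF linear_fst e(1)]
      linear_image_mem_closed_segment[OF linear_fst e'(1)] assms
    by (auto simp: closed_segment_eq_real_ivl split: if_splits)
  then have "s \<in> closed_segment e e'"
    using horizontal_closed_segment_iff[of "fst s" "snd s" "fst e" "fst e'"] e(2) e'(2)
    by (cases s, cases e, cases e') (simp add: closed_segment_eq_real_ivl)
  moreover have "closed_segment b c \<subseteq> convex hull {a, b, c, d}"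
    "closed_segment a d \<subseteq> convex hull {a, b, c, d}"
    by (auto simp: segment_convex_hull intro!: hull_mono)
  ultimately show ?thesis
    using e(1) e'(1) closed_segment_subset[OF _ _ convex_convex_hull] by blast
qed

lemma ray_meets_closed_segment:
  fixes p q r :: "real \<times> real"
  assumes "0 < snd p" "fst p * snd q \<le> snd p * fst q" "snd p * fst r \<le> fst p * snd r"
  obtains e where "e \<in> closed_segment q r" "e = (snd e / snd p) *\<^sub>R p"
proof -
  define f where "f e = snd p * fst e - fst p * snd e" for e :: "real \<times> real"
  have "linear f"
    by (rule linearI) (auto simp: f_def algebra_simps)
  moreover have "0 \<in> closed_segment (f q) (f r)"
    using assms(2,3) by (auto simp: f_def closed_segment_eq_real_ivl)
  ultimately obtain e where "e \<in> closed_segment q r" "f e = 0"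
    by (rule closed_segment_meets_level)
  then show ?thesis
    using that assms(1) by (auto simp: f_def prod_eq_iff field_simps)
qed

lemma scaleR_mem_closed_segment:
  "s \<in> closed_segment t 1 \<Longrightarrow> s *\<^sub>R p \<in> closed_segment (t *\<^sub>R p) p"
  using linear_image_mem_closed_segment[OF linear_scale_left, of s t 1 p] by simp

definition perspective :: "real \<Rightarrow> real \<Rightarrow> real \<times> real \<Rightarrow> real \<times> real" where
  "perspective c1 c2 p = (c1 * fst p / snd p, c2 / snd p)"

lemma perspective_perspective:
  "snd p \<noteq> 0 \<Longrightarrow> c1 \<noteq> 0 \<Longrightarrow> c2 \<noteq> 0 \<Longrightarrow> perspective (c2 / c1) c2 (perspective c1 c2 p) = p"
  by (simp add: perspective_def prod_eq_iff)

lemma perspective_mem_convex_hull: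
  assumes "finite S" and pos: "\<forall>p\<in>S. 0 < snd p" and "z \<in> convex hull S"
  shows "perspective c1 c2 z \<in> convex hull (perspective c1 c2 ` S)"
proof -
  obtain u where u: "\<forall>p\<in>S. 0 \<le> u p" "sum u S = 1" "(\<Sum>p\<in>S. u p *\<^sub>R p) = z"
    using assms(3) convex_hull_finite[OF assms(1)] by auto
  have fst_z: "fst z = (\<Sum>p\<in>S. u p * fst p)" and snd_z: "snd z = (\<Sum>p\<in>S. u p * snd p)"
    using u(3) by (auto simp: fst_sum snd_sum)
  obtain p0 where "p0 \<in> S" "0 < u p0"
    using u(1,2) by (metis order.not_eq_order_implies_strict sum.neutral zero_neq_one)
  then have "0 < snd z"
    unfolding snd_z using pos u(1) by (intro sum_pos2[OF assms(1)]) auto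
  define v where "v p = u p * snd p / snd z" for p
  have "sum v S = 1"
    using \<open>0 < snd z\<close> by (simp add: v_def snd_z flip: sum_divide_distrib)
  moreover have "\<forall>p\<in>S. 0 \<le> v p"
    using u(1) pos \<open>0 < snd z\<close> by (auto simp: v_def)
  ultimately have "(\<Sum>p\<in>S. v p *\<^sub>R perspective c1 c2 p) \<in> convex hull (perspective c1 c2 ` S)"
    by (intro convex_sum[OF assms(1) convex_convex_hull]) (auto intro: hull_inc)
  also have "(\<Sum>p\<in>S. v p *\<^sub>R perspective c1 c2 p)
      = (\<Sum>p\<in>S. ((c1 / snd z) * (u p * fst p), (c2 / snd z) * u p))"
    using pos by (intro sum.cong) (auto simp: v_def perspective_def)
  also have "\<dots> = perspective c1 c2 z"
    unfolding perspective_def prod_eq_iff fst_sum snd_sum fst_conv snd_conv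
    by (simp only: fst_z u(2) flip: sum_distrib_left) simp
  finally show ?thesis .
qed

section \<open>Quadrant-free sets of lattice points\<close>

definition quadrant_free :: "(nat \<times> nat) set \<Rightarrow> bool" where
  "quadrant_free W \<longleftrightarrow> (\<forall>s a b c d. a \<in> W \<longrightarrow> b \<in> W \<longrightarrow> c \<in> W \<longrightarrow> d \<in> W \<longrightarrow>
     fst s \<le> fst a \<longrightarrow> snd s \<le> snd a \<longrightarrow> fst b \<le> fst s \<longrightarrow> snd s \<le> snd b \<longrightarrow>
     fst c \<le> fst s \<longrightarrow> snd c \<le> snd s \<longrightarrow> fst s \<le> fst d \<longrightarrow> snd d \<le> snd s \<longrightarrow>
     s \<in> {a, b, c, d})"

lemma quadrant_freeD:
  assumes "quadrant_free W" "a \<in> W" "b \<in> W" "c \<in> W" "d \<in> W"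
    "fst s \<le> fst a" "snd s \<le> snd a" "fst b \<le> fst s" "snd s \<le> snd b"
    "fst c \<le> fst s" "snd c \<le> snd s" "fst s \<le> fst d" "snd d \<le> snd s"
  shows "s \<in> {a, b, c, d}"
  using assms unfolding quadrant_free_def by blast

lemma quadrant_free_swap:
  assumes "quadrant_free W"
  shows "quadrant_free (prod.swap ` W)"
  unfolding quadrant_free_def
proof (intro allI impI)
  fix s a b c d :: "nat \<times> nat"
  assume "a \<in> prod.swap ` W" "b \<in> prod.swap ` W" "c \<in> prod.swap ` W" "d \<in> prod.swap ` W"
    and le: "fst s \<le> fst a" "snd s \<le> snd a" "fst b \<le> fst s" "snd s \<le> snd b"
    "fst c \<le> fst s" "snd c \<le> snd s" "fst s \<le> fst d" "snd d \<le> snd s"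
  then have W: "prod.swap a \<in> W" "prod.swap d \<in> W" "prod.swap c \<in> W" "prod.swap b \<in> W"
    by auto
  have "prod.swap s \<in> {prod.swap a, prod.swap d, prod.swap c, prod.swap b}"
    by (rule quadrant_freeD[OF assms W]) (use le in auto)
  then show "s \<in> {a, b, c, d}"
    by (auto dest: arg_cong[where f = prod.swap])
qed

lemma quadrant_free_reflect:
  assumes "quadrant_free W" and box: "\<forall>w\<in>W. fst w \<le> M \<and> snd w \<le> N"
  shows "quadrant_free ((\<lambda>w. (M - fst w, N - snd w)) ` W)"
  unfolding quadrant_free_def
proof (intro allI impI)
  fix s a b c d :: "nat \<times> nat"
  let ?r = "\<lambda>w :: nat \<times> nat. (M - fst w, N - snd w)"
  assume "a \<in> ?r ` W" "b \<in> ?r ` W" "c \<in> ?r ` W" "d \<in> ?r ` W"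
    and le: "fst s \<le> fst a" "snd s \<le> snd a" "fst b \<le> fst s" "snd s \<le> snd b"
    "fst c \<le> fst s" "snd c \<le> snd s" "fst s \<le> fst d" "snd d \<le> snd s"
  then obtain a' b' c' d' where W: "a' \<in> W" "b' \<in> W" "c' \<in> W" "d' \<in> W"
    and r: "a = ?r a'" "b = ?r b'" "c = ?r c'" "d = ?r d'"
    by blast
  have bounds: "fst a' \<le> M" "fst b' \<le> M" "fst c' \<le> M" "fst d' \<le> M"
    "snd a' \<le> N" "snd b' \<le> N" "snd c' \<le> N" "snd d' \<le> N"
    using box W by auto
  have "fst (?r s) \<le> fst c'" using le(5) bounds(3) r(3) by simp
  moreover have "snd (?r s) \<le> snd c'" using le(6) bounds(7) r(3) by simp
  moreover have "fst d' \<le> fst (?r s)" using le(7) bounds(4) r(4) by simp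
  moreover have "snd (?r s) \<le> snd d'" using le(8) bounds(8) r(4) by simp
  moreover have "fst a' \<le> fst (?r s)" using le(1) bounds(1) r(1) by simp
  moreover have "snd a' \<le> snd (?r s)" using le(2) bounds(5) r(1) by simp
  moreover have "fst (?r s) \<le> fst b'" using le(3) bounds(2) r(2) by simp
  moreover have "snd b' \<le> snd (?r s)" using le(4) bounds(6) r(2) by simp
  ultimately have "?r s \<in> {c', d', a', b'}"
    by (intro quadrant_freeD[OF assms(1) W(3,4,1,2)])
  moreover have "s = ?r (?r s)"
    using le(1,2) r(1) by (simp add: prod_eq_iff)
  ultimately show "s \<in> {a, b, c, d}"
    using r by auto
qed

lemma quadrant_free_corner:
  assumes qf: "quadrant_free W"
    and box: "\<forall>w\<in>W. a0 \<le> fst w \<and> b0 \<le> snd w \<and> snd w \<le> N"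
    and "(a0, n0) \<in> W" "(m0, b0) \<in> W" "(m1, N) \<in> W" and "(a0, b0) \<notin> W"
  shows "(a0, N) \<in> W"
proof (rule ccontr)
  assume "(a0, N) \<notin> W"
  obtain l where l: "(a0, l) \<in> W" "\<And>n. (a0, n) \<in> W \<Longrightarrow> l \<le> n"
    using ex_has_least_nat[of "\<lambda>n. (a0, n) \<in> W" n0 id] assms(3) by auto
  obtain l' where l': "(a0, l') \<in> W" "\<And>n. (a0, n) \<in> W \<Longrightarrow> n \<le> l'"
    using Nat.ex_has_greatest_nat[of "\<lambda>n. (a0, n) \<in> W" n0 N] assms(3) box by force
  obtain b where b: "(b, b0) \<in> W" "\<And>m. (m, b0) \<in> W \<Longrightarrow> b \<le> m"
    using ex_has_least_nat[of "\<lambda>m. (m, b0) \<in> W" m0 id] assms(4) by auto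
  obtain t where t: "(t, N) \<in> W" "\<And>m. (m, N) \<in> W \<Longrightarrow> t \<le> m"
    using ex_has_least_nat[of "\<lambda>m. (m, N) \<in> W" m1 id] assms(5) by auto
  have "b0 < l" "a0 < b" "l \<le> l'" "l' < N" "a0 < t"
    using box l b l'(1) l'(2)[OF l(1)] t(1) assms(6) \<open>(a0, N) \<notin> W\<close>
    by (fastforce simp: order.order_iff_strict)+
  have "t < b"
  proof (rule ccontr)
    assume "\<not> t < b"
    then have "(b, l) \<in> {(t, N), (a0, l), (a0, l), (b, b0)}"
      using \<open>l \<le> l'\<close> \<open>l' < N\<close> \<open>a0 < b\<close> \<open>b0 < l\<close>
      by (intro quadrant_freeD[OF qf t(1) l(1) l(1) b(1)]) auto
    then show False
      using \<open>l \<le> l'\<close> \<open>l' < N\<close> \<open>a0 < b\<close> \<open>b0 < l\<close> by auto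
  qed
  have "(t, l') \<in> {(t, N), (a0, l'), (a0, l'), (b, b0)}"
    using \<open>t < b\<close> \<open>l' < N\<close> \<open>a0 < t\<close> \<open>b0 < l\<close> \<open>l \<le> l'\<close>
    by (intro quadrant_freeD[OF qf t(1) l'(1) l'(1) b(1)]) auto
  then show False
    using \<open>l' < N\<close> \<open>a0 < t\<close> \<open>t < b\<close> by auto
qed

lemma quadrant_free_corner_pair:
  assumes qf: "quadrant_free W"
    and box: "\<forall>w\<in>W. a0 \<le> fst w \<and> fst w \<le> M \<and> b0 \<le> snd w \<and> snd w \<le> N"
    and "\<exists>w\<in>W. fst w = a0" "\<exists>w\<in>W. fst w = M" "\<exists>w\<in>W. snd w = b0" "\<exists>w\<in>W. snd w = N"
    and "(a0, b0) \<notin> W"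
  shows "(a0, N) \<in> W \<and> (M, b0) \<in> W"
proof
  obtain n0 n1 m0 m1 where "(a0, n0) \<in> W" "(M, n1) \<in> W" "(m0, b0) \<in> W" "(m1, N) \<in> W"
    using assms(3-6) by (metis prod.collapse)
  then show "(a0, N) \<in> W"
    using quadrant_free_corner[OF qf _ _ _ _ assms(7)] box by blast
  have "(b0, M) \<in> prod.swap ` W"
  proof (rule quadrant_free_corner[OF quadrant_free_swap[OF qf]])
    show "(b0, m0) \<in> prod.swap ` W" "(n0, a0) \<in> prod.swap ` W" "(n1, M) \<in> prod.swap ` W"
      using \<open>(m0, b0) \<in> W\<close> \<open>(a0, n0) \<in> W\<close> \<open>(M, n1) \<in> W\<close> by force+
  qed (use box assms(7) in auto)
  then show "(M, b0) \<in> W"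
    by auto
qed

lemma quadrant_free_opposite_corners:
  assumes qf: "quadrant_free W"
    and box: "\<forall>w\<in>W. a0 \<le> fst w \<and> fst w \<le> M \<and> b0 \<le> snd w \<and> snd w \<le> N"
    and ext: "\<exists>w\<in>W. fst w = a0" "\<exists>w\<in>W. fst w = M" "\<exists>w\<in>W. snd w = b0" "\<exists>w\<in>W. snd w = N"
  shows "(a0, N) \<in> W \<and> (M, b0) \<in> W \<or> (a0, b0) \<in> W \<and> (M, N) \<in> W"
proof (cases "(a0, b0) \<in> W \<and> (M, N) \<in> W")
  case False
  show ?thesis
  proof (cases "(a0, b0) \<in> W")
    case False
    then show ?thesis
      using quadrant_free_corner_pair[OF qf box ext] by blast
  next
    case True
    then have "(M, N) \<notin> W"
      using \<open>\<not> ((a0, b0) \<in> W \<and> (M, N) \<in> W)\<close> by blast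
    define r where "r = (\<lambda>w :: nat \<times> nat. (M + a0 - fst w, N + b0 - snd w))"
    have rr: "r (r w) = w" if "w \<in> W" for w
      using box that by (auto simp: r_def prod_eq_iff)
    have "quadrant_free (r ` W)"
      unfolding r_def by (rule quadrant_free_reflect[OF qf]) (use box in auto)
    moreover have "\<forall>w\<in>r ` W. a0 \<le> fst w \<and> fst w \<le> M \<and> b0 \<le> snd w \<and> snd w \<le> N"
      using box by (auto simp: r_def)
    moreover have "\<exists>w\<in>r ` W. fst w = a0" "\<exists>w\<in>r ` W. fst w = M"
      "\<exists>w\<in>r ` W. snd w = b0" "\<exists>w\<in>r ` W. snd w = N"
      using ext box by (simp_all add: r_def) force+
    moreover have "(a0, b0) \<notin> r ` W"
    proof
      assume "(a0, b0) \<in> r ` W"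
      then obtain w where "w \<in> W" "(a0, b0) = r w"
        by blast
      then have "w = (M, N)"
        using box[rule_format, OF \<open>w \<in> W\<close>] by (auto simp: r_def prod_eq_iff)
      then show False
        using \<open>(M, N) \<notin> W\<close> \<open>w \<in> W\<close> by simp
    qed
    ultimately have "(a0, N) \<in> r ` W \<and> (M, b0) \<in> r ` W"
      by (rule quadrant_free_corner_pair)
    then obtain u v where "u \<in> W" "(a0, N) = r u" "v \<in> W" "(M, b0) = r v"
      by blast
    then have "u = (M, b0)" "v = (a0, N)"
      using box[rule_format, OF \<open>u \<in> W\<close>] box[rule_format, OF \<open>v \<in> W\<close>]
      by (auto simp: r_def prod_eq_iff)
    then show ?thesis
      using \<open>u \<in> W\<close> \<open>v \<in> W\<close> by simp
  qed
qed simp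

lemma card_le_4_if_unit_box:
  assumes "\<forall>w\<in>W. p \<le> fst w \<and> fst w \<le> Suc p \<and> q \<le> snd w \<and> snd w \<le> Suc q"
  shows "card W \<le> 4"
proof -
  have "W \<subseteq> {p, Suc p} \<times> {q, Suc q}"
    using assms by (force simp: le_Suc_eq)
  then have "card W \<le> card ({p, Suc p} \<times> {q, Suc q})"
    by (intro card_mono) auto
  then show ?thesis
    by (simp add: card_cartesian_product)
qed

definition shear :: "nat \<Rightarrow> nat \<Rightarrow> nat \<Rightarrow> nat \<times> nat \<Rightarrow> nat \<times> nat" where
  "shear a b d w = (fst w + b - (snd w + a), d - snd w)"

lemma shear_shear:
  "snd w + a \<le> fst w + b \<Longrightarrow> snd w \<le> d \<Longrightarrow> shear b (d + a) d (shear a b d w) = w"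
  by (simp add: shear_def prod_eq_iff)

lemma shear_shear':
  "snd w + b \<le> fst w + (d + a) \<Longrightarrow> snd w \<le> d \<Longrightarrow> shear a b d (shear b (d + a) d w) = w"
  by (simp add: shear_def prod_eq_iff)

lemma inj_on_shear:
  "\<forall>w\<in>W. snd w + a \<le> fst w + b \<and> snd w \<le> d \<Longrightarrow> inj_on (shear a b d) W"
  by (metis inj_on_inverseI shear_shear)

section \<open>Empty polygons in the exponential lattice\<close>

locale exp_lattice =
  fixes \<alpha> :: real
  assumes gt1: "1 < \<alpha>"
begin

lemma pow_less_pow_iff [simp]: "\<alpha> ^ m < \<alpha> ^ n \<longleftrightarrow> m < n"
  using gt1 by (simp add: power_strict_increasing_iff)

lemma pow_le_pow_iff [simp]: "\<alpha> ^ m \<le> \<alpha> ^ n \<longleftrightarrow> m \<le> n"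
  using gt1 by (simp add: power_increasing_iff)

lemma pow_eq_pow_iff [simp]: "\<alpha> ^ m = \<alpha> ^ n \<longleftrightarrow> m = n"
  by (metis order.eq_iff pow_le_pow_iff)

lemma pos_exponent_if_window: "\<alpha> / (\<alpha> - 1) \<le> \<alpha> ^ k \<Longrightarrow> 0 < k"
  using gt1 by (cases k) (auto simp: field_simps)

lemma card_exponents_in_window:
  assumes "finite R" and window: "\<forall>n\<in>R. x * (\<alpha> - 1) < \<alpha> ^ n \<and> \<alpha> ^ n \<le> x"
    and k: "\<alpha> / (\<alpha> - 1) \<le> \<alpha> ^ k"
  shows "card R < k"
proof (cases "R = {}")
  case True
  then show ?thesis
    using pos_exponent_if_window[OF k] by simp
next
  case False
  define d where "d = Max R - Min R"
  have "Min R \<in> R" "Max R \<in> R" "R \<subseteq> {Min R..Max R}"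
    using assms(1) False by auto
  then have "card R \<le> Suc d"
    using card_mono[of "{Min R..Max R}" R] by (simp add: d_def)
  have "\<alpha> ^ Max R * (\<alpha> - 1) < \<alpha> ^ Min R"
    using window \<open>Min R \<in> R\<close> \<open>Max R \<in> R\<close> gt1
    by (meson mult_right_mono diff_ge_0_iff_ge less_eq_real_def order.strict_trans1)
  moreover have "\<alpha> ^ Max R = \<alpha> ^ Min R * \<alpha> ^ d"
    using \<open>R \<subseteq> {Min R..Max R}\<close> \<open>Min R \<in> R\<close>
    by (auto simp: d_def simp flip: power_add)
  ultimately have "\<alpha> ^ d * (\<alpha> - 1) < 1"
    using gt1 by (simp add: mult.assoc)
  then have "\<alpha> ^ Suc d * (\<alpha> - 1) < \<alpha>"
    using gt1 mult_strict_left_mono[of _ 1 \<alpha>] by (simp add: ac_simps)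
  then have "\<alpha> ^ Suc d < \<alpha> / (\<alpha> - 1)"
    using gt1 by (simp add: pos_less_divide_eq)
  then have "Suc d < k"
    using k by (metis order.strict_trans2 pow_less_pow_iff)
  then show ?thesis
    using \<open>card R \<le> Suc d\<close> by simp
qed

definition pt :: "nat \<times> nat \<Rightarrow> real \<times> real" where
  "pt w = (\<alpha> ^ fst w, \<alpha> ^ snd w)"

lemma pt_eq_iff [simp]: "pt u = pt v \<longleftrightarrow> u = v"
  by (auto simp: pt_def prod_eq_iff)

lemma L2_eq_range_pt: "L2 \<alpha> = range pt"
  by (auto simp: L2_def pt_def image_iff)

lemma convex_hull_pt_subset: "convex hull (pt ` W) \<subseteq> {1..} \<times> {1..}"
  using gt1 by (intro hull_minimal convex_Times) (auto simp: pt_def)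

definition empty_polygon :: "(nat \<times> nat) set \<Rightarrow> bool" where
  "empty_polygon W \<longleftrightarrow> (\<forall>Q\<subseteq>W. \<forall>z. pt z \<in> convex hull (pt ` Q) \<longrightarrow> z \<in> Q)"

lemma empty_polygon_iff:
  "empty_polygon W \<longleftrightarrow> (\<forall>w\<in>W. pt w \<notin> convex hull (pt ` (W - {w}))) \<and>
     (\<forall>z. pt z \<in> convex hull (pt ` W) \<longrightarrow> z \<in> W)"
proof
  assume "empty_polygon W"
  then show "(\<forall>w\<in>W. pt w \<notin> convex hull (pt ` (W - {w}))) \<and>
     (\<forall>z. pt z \<in> convex hull (pt ` W) \<longrightarrow> z \<in> W)"
    unfolding empty_polygon_def by (metis Diff_iff Diff_subset insertI1 order_refl)
next
  assume "(\<forall>w\<in>W. pt w \<notin> convex hull (pt ` (W - {w}))) \<and>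
     (\<forall>z. pt z \<in> convex hull (pt ` W) \<longrightarrow> z \<in> W)"
  then show "empty_polygon W"
    unfolding empty_polygon_def
    by (metis (no_types, lifting) hull_mono image_mono insert_Diff insert_subset subsetD
        subset_insert_iff)
qed

lemma empty_polygonD:
  "empty_polygon W \<Longrightarrow> Q \<subseteq> W \<Longrightarrow> pt z \<in> convex hull (pt ` Q) \<Longrightarrow> z \<in> Q"
  unfolding empty_polygon_def by blast

lemma empty_polygon_segment:
  "empty_polygon W \<Longrightarrow> u \<in> W \<Longrightarrow> v \<in> W \<Longrightarrow> pt z \<in> closed_segment (pt u) (pt v) \<Longrightarrow>
    z = u \<or> z = v"
  using empty_polygonD[of W "{u, v}" z] by (simp add: segment_convex_hull)

lemma empty_polygon_triangle:
  assumes "empty_polygon W" "a \<in> W" "b \<in> W" "u \<in> W"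
    and "e \<in> closed_segment (pt a) (pt b)" "pt z \<in> closed_segment (pt u) e"
  shows "z \<in> {a, b, u}"
proof -
  have "closed_segment (pt a) (pt b) \<subseteq> convex hull (pt ` {a, b, u})"
    by (auto simp: segment_convex_hull intro!: hull_mono)
  then have "closed_segment (pt u) e \<subseteq> convex hull (pt ` {a, b, u})"
    using assms(5) by (intro closed_segment_subset convex_convex_hull) (auto intro: hull_inc)
  then have "pt z \<in> convex hull (pt ` {a, b, u})"
    using assms(6) by blast
  then show ?thesis
    by (rule empty_polygonD[OF assms(1), rotated]) (use assms(2-4) in auto)
qed

lemma pt_mem_row_segment:
  "a \<le> b \<Longrightarrow> b \<le> c \<Longrightarrow> pt (b, n) \<in> closed_segment (pt (a, n)) (pt (c, n))"
  by (simp add: pt_def horizontal_closed_segment_iff closed_segment_eq_real_ivl)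

lemma pt_mem_column_segment:
  "a \<le> b \<Longrightarrow> b \<le> c \<Longrightarrow> pt (m, b) \<in> closed_segment (pt (m, a)) (pt (m, c))"
  by (simp add: pt_def vertical_closed_segment_iff closed_segment_eq_real_ivl)

lemma empty_polygon_row_step:
  assumes "empty_polygon W" "(a, n) \<in> W" "(c, n) \<in> W" "a \<le> c"
  shows "c \<le> Suc a"
  using empty_polygon_segment[OF assms(1-3) pt_mem_row_segment[of a "Suc a" c n]] assms(4)
  by (cases "c \<le> Suc a") auto

lemma empty_polygon_column_step:
  assumes "empty_polygon W" "(m, a) \<in> W" "(m, c) \<in> W" "a \<le> c"
  shows "c \<le> Suc a"
  using empty_polygon_segment[OF assms(1-3) pt_mem_column_segment[of a "Suc a" c m]] assms(4)
  by (cases "c \<le> Suc a") auto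

lemma empty_polygon_quadrant_free: "empty_polygon W \<Longrightarrow> quadrant_free W"
  unfolding quadrant_free_def
proof (intro allI impI)
  fix s a b c d
  assume "empty_polygon W" "a \<in> W" "b \<in> W" "c \<in> W" "d \<in> W"
    "fst s \<le> fst a" "snd s \<le> snd a" "fst b \<le> fst s" "snd s \<le> snd b"
    "fst c \<le> fst s" "snd c \<le> snd s" "fst s \<le> fst d" "snd d \<le> snd s"
  moreover from this have "pt s \<in> convex hull (pt ` {a, b, c, d})"
    by (simp add: pt_def mem_convex_hull_quadrants)
  ultimately show "s \<in> {a, b, c, d}"
    by (intro empty_polygonD) auto
qed

lemma empty_polygon_swap:
  assumes "empty_polygon W"
  shows "empty_polygon (prod.swap ` W)"
  unfolding empty_polygon_def
proof (intro allI impI)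
  fix Q z
  assume "Q \<subseteq> prod.swap ` W" and z: "pt z \<in> convex hull (pt ` Q)"
  have pt_swap: "pt ` prod.swap ` A = prod.swap ` pt ` A" for A
    by (force simp: pt_def)
  have "linear (prod.swap :: real \<times> real \<Rightarrow> real \<times> real)"
    by (simp add: linear_iff)
  then have "prod.swap (pt z) \<in> convex hull (pt ` prod.swap ` Q)"
    using z by (simp add: pt_swap flip: convex_hull_linear_image)
  moreover have "prod.swap ` Q \<subseteq> W"
    using \<open>Q \<subseteq> prod.swap ` W\<close> by auto
  moreover have "prod.swap (pt z) = pt (prod.swap z)"
    by (simp add: pt_def)
  ultimately have "prod.swap z \<in> prod.swap ` Q"
    using empty_polygonD[OF assms] by metis
  then show "z \<in> Q"
    by (metis image_iff swap_swap)
qed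

lemma pow_div_pow: "n \<le> m \<Longrightarrow> \<alpha> ^ m / \<alpha> ^ n = \<alpha> ^ (m - n)"
  using gt1 by (simp add: power_diff)

lemma one_le_pow_div_pow_iff: "1 \<le> \<alpha> ^ m / \<alpha> ^ n \<longleftrightarrow> n \<le> m"
  using gt1 by (simp add: pos_le_divide_eq)

lemma perspective_pt:
  "perspective (\<alpha> ^ b / \<alpha> ^ a) (\<alpha> ^ d) (pt w)
     = (\<alpha> ^ (fst w + b) / \<alpha> ^ (snd w + a), \<alpha> ^ d / \<alpha> ^ snd w)"
  using gt1 by (simp add: perspective_def pt_def power_add field_simps)

lemma perspective_pt_shear:
  "snd w + a \<le> fst w + b \<Longrightarrow> snd w \<le> d \<Longrightarrow>
    perspective (\<alpha> ^ b / \<alpha> ^ a) (\<alpha> ^ d) (pt w) = pt (shear a b d w)"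
  unfolding perspective_pt by (simp add: shear_def pt_def pow_div_pow)

lemma empty_polygon_shear:
  assumes "finite W" "empty_polygon W" and strip: "\<forall>w\<in>W. snd w + a \<le> fst w + b \<and> snd w \<le> d"
  shows "empty_polygon (shear a b d ` W)"
  unfolding empty_polygon_def
proof (intro allI impI)
  fix Q' z
  assume "Q' \<subseteq> shear a b d ` W" and z: "pt z \<in> convex hull (pt ` Q')"
  then obtain Q where "Q \<subseteq> W" and Q': "Q' = shear a b d ` Q"
    by (auto simp: subset_image_iff)
  let ?T = "perspective (\<alpha> ^ b / \<alpha> ^ a) (\<alpha> ^ d)"
  let ?S = "perspective (\<alpha> ^ (d + a) / \<alpha> ^ b) (\<alpha> ^ d)"
  have "pt ` Q' = ?T ` pt ` Q"
    using strip \<open>Q \<subseteq> W\<close> by (force simp: Q' image_image perspective_pt_shear intro!: image_cong)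
  have "finite (?T ` pt ` Q)"
    using \<open>Q \<subseteq> W\<close> assms(1) finite_subset by blast
  moreover have "\<forall>p\<in>?T ` pt ` Q. 0 < snd p"
    using gt1 by (auto simp: perspective_pt)
  ultimately have "?S (pt z) \<in> convex hull (?S ` ?T ` pt ` Q)"
    using perspective_mem_convex_hull z \<open>pt ` Q' = ?T ` pt ` Q\<close> by metis
  moreover have "?S ` ?T ` pt ` Q = pt ` Q"
    using perspective_perspective[of _ "\<alpha> ^ b / \<alpha> ^ a" "\<alpha> ^ d"] gt1
    by (force simp: image_image power_add pt_def intro!: image_cong)
  ultimately have S_z: "?S (pt z) \<in> convex hull (pt ` Q)"
    by simp
  then have "1 \<le> \<alpha> ^ (fst z + (d + a)) / \<alpha> ^ (snd z + b)" "1 \<le> \<alpha> ^ d / \<alpha> ^ snd z"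
    using convex_hull_pt_subset[of Q] by (auto simp: perspective_pt)
  then have cond: "snd z + b \<le> fst z + (d + a)" "snd z \<le> d"
    by (simp_all add: one_le_pow_div_pow_iff)
  then have "shear b (d + a) d z \<in> Q"
    using empty_polygonD[OF assms(2) \<open>Q \<subseteq> W\<close>] S_z by (simp add: perspective_pt_shear)
  then show "z \<in> Q'"
    using shear_shear'[OF cond] Q' by (metis image_eqI)
qed

end

section \<open>Counting along the chord between two corners\<close>

locale corner_polygon = exp_lattice +
  fixes W :: "(nat \<times> nat) set" and p0 p1 q0 q1 :: nat
  assumes finite_W: "finite W" and empty: "empty_polygon W"
    and box: "\<And>w. w \<in> W \<Longrightarrow> p0 \<le> fst w \<and> fst w \<le> p1 \<and> q0 \<le> snd w \<and> snd w \<le> q1"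
    and top_left: "(p0, q1) \<in> W" and bottom_right: "(p1, q0) \<in> W"
    and wide: "p0 < p1" and tall: "q0 < q1"
begin

abbreviation chord :: "(real \<times> real) set" where
  "chord \<equiv> closed_segment (pt (p0, q1)) (pt (p1, q0))"

definition normal :: "real \<times> real" where
  "normal = (\<alpha> ^ q1 - \<alpha> ^ q0, \<alpha> ^ p1 - \<alpha> ^ p0)"

definition level :: real where
  "level = \<alpha> ^ p1 * \<alpha> ^ q1 - \<alpha> ^ p0 * \<alpha> ^ q0"

definition interior_pts :: "(nat \<times> nat) set" where
  "interior_pts = {w \<in> W. p0 < fst w \<and> fst w < p1 \<and> q0 < snd w \<and> snd w < q1}"

lemma normal_pos: "0 < fst normal" "0 < snd normal"
  using wide tall by (simp_all add: normal_def)

lemma inner_normal: "inner normal p = fst normal * fst p + snd normal * snd p"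
  by (cases p) (simp add: normal_def)

lemma inner_normal_corners:
  "inner normal (pt (p0, q1)) = level" "inner normal (pt (p1, q0)) = level"
  by (simp_all add: inner_normal normal_def level_def pt_def algebra_simps)

lemma inner_normal_chord: "e \<in> chord \<Longrightarrow> inner normal e = level"
  using closed_segment_subset[OF _ _ convex_hyperplane, of "pt (p0, q1)" normal level
      "pt (p1, q0)"] inner_normal_corners by auto

lemma chord_at_height:
  assumes "q0 \<le> n" "n \<le> q1"
  obtains e where "e \<in> chord" "snd e = \<alpha> ^ n"
proof -
  have "\<alpha> ^ n \<in> closed_segment (snd (pt (p0, q1))) (snd (pt (p1, q0)))"
    using assms by (simp add: pt_def closed_segment_eq_real_ivl)
  then show thesis
    using closed_segment_meets_level[OF linear_snd] that by blast
qed

lemma chord_at_abscissa: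
  assumes "p0 \<le> m" "m \<le> p1"
  obtains e where "e \<in> chord" "fst e = \<alpha> ^ m"
proof -
  have "\<alpha> ^ m \<in> closed_segment (fst (pt (p0, q1))) (fst (pt (p1, q0)))"
    using assms by (simp add: pt_def closed_segment_eq_real_ivl)
  then show thesis
    using closed_segment_meets_level[OF linear_fst] that by blast
qed

lemma interior_pts_not_corner:
  "w \<in> interior_pts \<Longrightarrow> w \<in> W \<and> w \<noteq> (p0, q1) \<and> w \<noteq> (p1, q0)"
  by (auto simp: interior_pts_def)

lemma interior_off_chord:
  assumes "w \<in> interior_pts"
  shows "inner normal (pt w) \<noteq> level"
proof
  assume on: "inner normal (pt w) = level"
  have "q0 \<le> snd w" "snd w \<le> q1"
    using assms by (auto simp: interior_pts_def)
  then obtain e where e: "e \<in> chord" "snd e = \<alpha> ^ snd w"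
    by (rule chord_at_height)
  then have "fst normal * fst e + snd normal * snd e
      = fst normal * \<alpha> ^ fst w + snd normal * \<alpha> ^ snd w"
    using on inner_normal_chord[OF e(1)] by (simp add: inner_normal pt_def)
  then have "fst e = \<alpha> ^ fst w"
    using e(2) normal_pos(1) by simp
  then have "e = pt w"
    using e(2) by (simp add: pt_def prod_eq_iff)
  then show False
    using empty_polygon_segment[OF empty top_left bottom_right] e(1)
      interior_pts_not_corner[OF assms] by blast
qed

lemma chord_triangle:
  assumes "u \<in> W" "e \<in> chord" "pt z \<in> closed_segment (pt u) e"
    and "z \<noteq> u" "z \<noteq> (p0, q1)" "z \<noteq> (p1, q0)"
  shows False
  using empty_polygon_triangle[OF empty top_left bottom_right assms(1-3)] assms(4-6) by blast

lemma above_chord_same_row: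
  assumes "u \<in> interior_pts" "v \<in> interior_pts" "snd u = snd v"
    and "level < inner normal (pt u)" "level < inner normal (pt v)"
  shows "u = v"
proof (rule ccontr)
  have left_of: False if "x \<in> interior_pts" "y \<in> interior_pts" "snd x = snd y"
      "fst x < fst y" "level < inner normal (pt x)" for x y
  proof -
    have "q0 \<le> snd x" "snd x \<le> q1"
      using that(1) by (auto simp: interior_pts_def)
    then obtain e where e: "e \<in> chord" "snd e = \<alpha> ^ snd x"
      by (rule chord_at_height)
    then have "fst normal * fst e < fst normal * \<alpha> ^ fst x"
      using that(5) inner_normal_chord[OF e(1)] by (simp add: inner_normal pt_def)
    then have "fst e \<le> \<alpha> ^ fst x"
      using normal_pos by simp
    moreover have "\<alpha> ^ fst x \<le> \<alpha> ^ fst y"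
      using that(4) by simp
    moreover have "e = (fst e, \<alpha> ^ snd x)"
      using e(2) by (simp add: prod_eq_iff)
    ultimately have "pt x \<in> closed_segment e (pt y)"
      using Pair_mem_horizontal_segment[of "fst e" "\<alpha> ^ fst x" "\<alpha> ^ fst y" "\<alpha> ^ snd x"] that(3)
      by (simp add: pt_def)
    then have "pt x \<in> closed_segment (pt y) e"
      by (simp add: closed_segment_commute)
    then show False
      using chord_triangle[OF _ e(1)] interior_pts_not_corner that(1,2,4) by blast
  qed
  assume "u \<noteq> v"
  then have "fst u \<noteq> fst v"
    using assms(3) by (simp add: prod_eq_iff)
  then show False
    using left_of assms by (metis linorder_neqE_nat)
qed

lemma below_chord_same_row:
  assumes "u \<in> interior_pts" "v \<in> interior_pts" "snd u = snd v"
    and "inner normal (pt u) < level" "inner normal (pt v) < level"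
  shows "u = v"
proof (rule ccontr)
  have right_of: False if "x \<in> interior_pts" "y \<in> interior_pts" "snd x = snd y"
      "fst x < fst y" "inner normal (pt y) < level" for x y
  proof -
    have "q0 \<le> snd x" "snd x \<le> q1"
      using that(1) by (auto simp: interior_pts_def)
    then obtain e where e: "e \<in> chord" "snd e = \<alpha> ^ snd x"
      by (rule chord_at_height)
    then have "fst normal * \<alpha> ^ fst y < fst normal * fst e"
      using that(3,5) inner_normal_chord[OF e(1)] by (simp add: inner_normal pt_def)
    then have "\<alpha> ^ fst y \<le> fst e"
      using normal_pos by simp
    moreover have "\<alpha> ^ fst x \<le> \<alpha> ^ fst y"
      using that(4) by simp
    moreover have "e = (fst e, \<alpha> ^ snd x)"
      using e(2) by (simp add: prod_eq_iff)
    ultimately have "pt y \<in> closed_segment (pt x) e"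
      using Pair_mem_horizontal_segment[of "\<alpha> ^ fst x" "\<alpha> ^ fst y" "fst e" "\<alpha> ^ snd x"] that(3)
      by (simp add: pt_def)
    then show False
      using chord_triangle[OF _ e(1)] interior_pts_not_corner that(1,2,4) by blast
  qed
  assume "u \<noteq> v"
  then have "fst u \<noteq> fst v"
    using assms(3) by (simp add: prod_eq_iff)
  then show False
    using right_of assms by (metis linorder_neqE_nat)
qed

lemma below_chord_same_column:
  assumes "u \<in> interior_pts" "v \<in> interior_pts" "fst u = fst v"
    and "inner normal (pt u) < level" "inner normal (pt v) < level"
  shows "u = v"
proof (rule ccontr)
  have above_of: False if "x \<in> interior_pts" "y \<in> interior_pts" "fst x = fst y"
      "snd x < snd y" "inner normal (pt y) < level" for x y
  proof -
    have "p0 \<le> fst x" "fst x \<le> p1"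
      using that(1) by (auto simp: interior_pts_def)
    then obtain e where e: "e \<in> chord" "fst e = \<alpha> ^ fst x"
      by (rule chord_at_abscissa)
    then have "snd normal * \<alpha> ^ snd y < snd normal * snd e"
      using that(3,5) inner_normal_chord[OF e(1)] by (simp add: inner_normal pt_def)
    then have "\<alpha> ^ snd y \<le> snd e"
      using normal_pos by simp
    moreover have "\<alpha> ^ snd x \<le> \<alpha> ^ snd y"
      using that(4) by simp
    moreover have "e = (\<alpha> ^ fst x, snd e)"
      using e(2) by (simp add: prod_eq_iff)
    ultimately have "pt y \<in> closed_segment (pt x) e"
      using Pair_mem_vertical_segment[of "\<alpha> ^ snd x" "\<alpha> ^ snd y" "snd e" "\<alpha> ^ fst x"] that(3)
      by (simp add: pt_def)
    then show False
      using chord_triangle[OF _ e(1)] interior_pts_not_corner that(1,2,4) by blast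
  qed
  assume "u \<noteq> v"
  then have "snd u \<noteq> snd v"
    using assms(3) by (simp add: prod_eq_iff)
  then show False
    using above_of assms by (metis linorder_neqE_nat)
qed

lemma right_neighbour_above_chord:
  assumes w: "w \<in> interior_pts" and "inner normal (pt w) < level" and "Suc (fst w) < p1"
  shows "level < inner normal (pt (Suc (fst w), snd w))"
proof (rule ccontr)
  define z where "z = (Suc (fst w), snd w)"
  assume "\<not> level < inner normal (pt (Suc (fst w), snd w))"
  then have z_below: "inner normal (pt z) \<le> level"
    by (simp add: z_def)
  have "q0 \<le> snd w" "snd w \<le> q1"
    using w by (auto simp: interior_pts_def)
  then obtain e where e: "e \<in> chord" "snd e = \<alpha> ^ snd w"
    by (rule chord_at_height)
  then have "fst normal * \<alpha> ^ Suc (fst w) \<le> fst normal * fst e"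
    using z_below inner_normal_chord[OF e(1)] by (simp add: inner_normal pt_def z_def)
  then have "\<alpha> ^ Suc (fst w) \<le> fst e"
    using normal_pos by simp
  moreover have "\<alpha> ^ fst w \<le> \<alpha> ^ Suc (fst w)"
    by (rule pow_le_pow_iff[THEN iffD2]) simp
  moreover have "e = (fst e, \<alpha> ^ snd w)"
    using e(2) by (simp add: prod_eq_iff)
  ultimately have "pt z \<in> closed_segment (pt w) e"
    using Pair_mem_horizontal_segment[of "\<alpha> ^ fst w" "\<alpha> ^ Suc (fst w)" "fst e" "\<alpha> ^ snd w"]
    by (simp add: pt_def z_def)
  moreover have "z \<noteq> w" "z \<noteq> (p0, q1)" "z \<noteq> (p1, q0)"
    using w by (auto simp: z_def interior_pts_def prod_eq_iff)
  ultimately show False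
    using chord_triangle[OF _ e(1)] interior_pts_not_corner[OF w] by blast
qed

lemma card_rows_above_chord:
  assumes "finite R" and rows: "\<And>n. n \<in> R \<Longrightarrow> n < q1 \<and> (\<exists>m<p1. level < inner normal (pt (m, n)))"
    and k: "\<alpha> / (\<alpha> - 1) \<le> \<alpha> ^ k"
  shows "card R < k"
proof -
  define x where "x = level / snd normal"
  have "0 < fst normal * \<alpha> ^ p0" "0 < snd normal * \<alpha> ^ q0"
    using normal_pos gt1 by simp_all
  then have top: "snd normal * \<alpha> ^ q1 \<le> level" and right: "fst normal * \<alpha> ^ p1 \<le> level"
    using inner_normal_corners by (simp_all add: inner_normal pt_def)
  have "x * (\<alpha> - 1) < \<alpha> ^ Suc n \<and> \<alpha> ^ Suc n \<le> x" if n: "n \<in> R" for n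
  proof
    obtain m where "n < q1" "m < p1" and above: "level < inner normal (pt (m, n))"
      using rows[OF n] by blast
    have "\<alpha> * level < \<alpha> * inner normal (pt (m, n))"
      using above gt1 by simp
    also have "\<dots> = fst normal * \<alpha> ^ Suc m + snd normal * \<alpha> ^ Suc n"
      by (simp add: inner_normal pt_def algebra_simps)
    also have "\<dots> \<le> level + snd normal * \<alpha> ^ Suc n"
    proof -
      have "fst normal * \<alpha> ^ Suc m \<le> fst normal * \<alpha> ^ p1"
        using normal_pos \<open>m < p1\<close> by (simp del: power_Suc)
      then show ?thesis
        using right by linarith
    qed
    finally show "x * (\<alpha> - 1) < \<alpha> ^ Suc n"
      using normal_pos by (simp add: x_def pos_divide_less_eq algebra_simps)
    have "\<alpha> ^ Suc n \<le> \<alpha> ^ q1"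
      using \<open>n < q1\<close> by (simp del: power_Suc)
    then have "snd normal * \<alpha> ^ Suc n \<le> snd normal * \<alpha> ^ q1"
      using normal_pos by simp
    then have "snd normal * \<alpha> ^ Suc n \<le> level"
      using top by linarith
    then show "\<alpha> ^ Suc n \<le> x"
      using normal_pos by (simp add: x_def pos_le_divide_eq mult.commute)
  qed
  then have "card (Suc ` R) < k"
    using assms(1) by (intro card_exponents_in_window[OF _ _ k]) auto
  then show ?thesis
    by (simp add: card_image)
qed

lemma boundary_or_interior:
  assumes "w \<in> W"
  shows "w \<in> {(p0, q1), (p1, q0), (Suc p0, q1), (p0, q1 - 1), (p1 - 1, q0), (p1, Suc q0)}
    \<or> w \<in> interior_pts"
proof -
  obtain m n where w: "w = (m, n)"
    by fastforce
  have bounds: "p0 \<le> m" "m \<le> p1" "q0 \<le> n" "n \<le> q1"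
    using box[OF assms] w by auto
  have top: "m = p0 \<or> m = Suc p0" if "n = q1"
  proof -
    have "m \<le> Suc p0"
      using empty_polygon_row_step[OF empty top_left _ bounds(1)] assms w that by simp
    then show ?thesis
      using bounds(1) by arith
  qed
  have left: "n = q1 \<or> n = q1 - 1" if "m = p0"
  proof -
    have "q1 \<le> Suc n"
      using empty_polygon_column_step[OF empty _ top_left bounds(4)] assms w that by simp
    then show ?thesis
      using bounds(4) by arith
  qed
  have bottom: "m = p1 \<or> m = p1 - 1" if "n = q0"
  proof -
    have "p1 \<le> Suc m"
      using empty_polygon_row_step[OF empty _ bottom_right bounds(2)] assms w that by simp
    then show ?thesis
      using bounds(2) by arith
  qed
  have right: "n = q0 \<or> n = Suc q0" if "m = p1"
  proof -
    have "n \<le> Suc q0"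
      using empty_polygon_column_step[OF empty bottom_right _ bounds(3)] assms w that by simp
    then show ?thesis
      using bounds(3) by arith
  qed
  show ?thesis
  proof (cases "n = q1 \<or> m = p0 \<or> n = q0 \<or> m = p1")
    case True
    then show ?thesis
      using top left bottom right w by fastforce
  next
    case False
    then show ?thesis
      using assms bounds w by (simp add: interior_pts_def)
  qed
qed

lemma top_left_neighbours:
  assumes "\<not> (p1 = Suc p0 \<and> q1 = Suc q0)"
  shows "card (W \<inter> {(Suc p0, q1), (p0, q1 - 1)}) \<le> 1"
proof -
  have "\<not> ((Suc p0, q1) \<in> W \<and> (p0, q1 - 1) \<in> W)"
  proof
    assume "(Suc p0, q1) \<in> W \<and> (p0, q1 - 1) \<in> W"
    then have "(Suc p0, q1 - 1) \<in> {(Suc p0, q1), (p0, q1 - 1), (p0, q1 - 1), (p1, q0)}"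
      using wide tall
      by (intro quadrant_freeD[OF empty_polygon_quadrant_free[OF empty] _ _ _ bottom_right]) auto
    then show False
      using assms wide tall by auto
  qed
  then show ?thesis
    by (auto simp: card_le_Suc0_iff_eq)
qed

lemma bottom_right_neighbours:
  assumes "\<not> (p1 = Suc p0 \<and> q1 = Suc q0)"
  shows "card (W \<inter> {(p1 - 1, q0), (p1, Suc q0)}) \<le> 1"
proof -
  have "\<not> ((p1 - 1, q0) \<in> W \<and> (p1, Suc q0) \<in> W)"
  proof
    assume "(p1 - 1, q0) \<in> W \<and> (p1, Suc q0) \<in> W"
    then have "(p1 - 1, Suc q0) \<in> {(p1, Suc q0), (p0, q1), (p1 - 1, q0), (p1 - 1, q0)}"
      using wide tall
      by (intro quadrant_freeD[OF empty_polygon_quadrant_free[OF empty] _ top_left]) auto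
    then show False
      using assms wide tall by auto
  qed
  then show ?thesis
    by (auto simp: card_le_Suc0_iff_eq)
qed

lemma card_above_chord:
  assumes k: "\<alpha> / (\<alpha> - 1) \<le> \<alpha> ^ k"
  shows "card {w \<in> interior_pts. level < inner normal (pt w)} < k" (is "card ?A < k")
proof -
  have "finite ?A"
    using finite_W by (simp add: interior_pts_def)
  have "card (snd ` ?A) < k"
  proof (rule card_rows_above_chord[OF _ _ k])
    show "finite (snd ` ?A)"
      using \<open>finite ?A\<close> by simp
    fix n assume "n \<in> snd ` ?A"
    then show "n < q1 \<and> (\<exists>m<p1. level < inner normal (pt (m, n)))"
      by (auto simp: interior_pts_def)
  qed
  moreover have "inj_on snd ?A"
    using above_chord_same_row by (auto simp: inj_on_def)
  ultimately show ?thesis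
    by (simp add: card_image)
qed

lemma card_below_chord_far:
  assumes k: "\<alpha> / (\<alpha> - 1) \<le> \<alpha> ^ k"
  shows "card {w \<in> interior_pts. inner normal (pt w) < level \<and> Suc (fst w) < p1} < k"
    (is "card ?B < k")
proof -
  have "finite ?B"
    using finite_W by (simp add: interior_pts_def)
  have "card (snd ` ?B) < k"
  proof (rule card_rows_above_chord[OF _ _ k])
    show "finite (snd ` ?B)"
      using \<open>finite ?B\<close> by simp
    fix n assume "n \<in> snd ` ?B"
    then show "n < q1 \<and> (\<exists>m<p1. level < inner normal (pt (m, n)))"
      using right_neighbour_above_chord by (auto simp: interior_pts_def)
  qed
  moreover have "inj_on snd ?B"
    using below_chord_same_row by (auto simp: inj_on_def)
  ultimately show ?thesis
    by (simp add: card_image)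
qed

lemma card_below_chord_near:
  "card {w \<in> interior_pts. inner normal (pt w) < level \<and> p1 \<le> Suc (fst w)} \<le> 1"
    (is "card ?C \<le> 1")
proof -
  have "u = v" if "u \<in> ?C" "v \<in> ?C" for u v
  proof -
    have "fst u = p1 - 1" "fst v = p1 - 1"
      using that by (auto simp: interior_pts_def)
    then show ?thesis
      using below_chord_same_column that by auto
  qed
  moreover have "finite ?C"
    using finite_W by (simp add: interior_pts_def)
  ultimately show ?thesis
    by (simp add: card_le_Suc0_iff_eq)
qed

theorem card_le:
  assumes k: "\<alpha> / (\<alpha> - 1) \<le> \<alpha> ^ k" and not_unit: "\<not> (p1 = Suc p0 \<and> q1 = Suc q0)"
  shows "card W \<le> 2 * k + 3"
proof -
  let ?A = "{w \<in> interior_pts. level < inner normal (pt w)}"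
  let ?B = "{w \<in> interior_pts. inner normal (pt w) < level \<and> Suc (fst w) < p1}"
  let ?C = "{w \<in> interior_pts. inner normal (pt w) < level \<and> p1 \<le> Suc (fst w)}"
  let ?E = "W \<inter> {(Suc p0, q1), (p0, q1 - 1)}" and ?F = "W \<inter> {(p1 - 1, q0), (p1, Suc q0)}"
  have "W \<subseteq> {(p0, q1), (p1, q0)} \<union> ?E \<union> ?F \<union> ?A \<union> ?B \<union> ?C"
  proof
    fix w assume "w \<in> W"
    from boundary_or_interior[OF this]
    show "w \<in> {(p0, q1), (p1, q0)} \<union> ?E \<union> ?F \<union> ?A \<union> ?B \<union> ?C"
    proof
      assume "w \<in> interior_pts"
      moreover have "inner normal (pt w) < level \<or> level < inner normal (pt w)"
        using interior_off_chord[OF \<open>w \<in> interior_pts\<close>] by linarith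
      ultimately show ?thesis
        by (auto simp: not_less)
    qed (use \<open>w \<in> W\<close> in blast)
  qed
  then have "card W \<le> card ({(p0, q1), (p1, q0)} \<union> ?E \<union> ?F \<union> ?A \<union> ?B \<union> ?C)"
    using finite_W by (intro card_mono) (auto simp: interior_pts_def)
  also have "\<dots> \<le> card {(p0, q1), (p1, q0)} + card ?E + card ?F + card ?A + card ?B + card ?C"
    by (intro order.trans[OF card_Un_le] add_mono order.refl)+
  also have "\<dots> \<le> 2 + 1 + 1 + (k - 1) + (k - 1) + 1"
    using top_left_neighbours[OF not_unit] bottom_right_neighbours[OF not_unit]
      card_above_chord[OF k] card_below_chord_far[OF k] card_below_chord_near
    by (intro add_mono) (auto simp: card_insert_if)
  finally show ?thesis
    using card_above_chord[OF k] by linarith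
qed

end

context exp_lattice
begin

lemma card_anti_diagonal_corners:
  assumes "finite W" "empty_polygon W"
    and box: "\<forall>w\<in>W. p0 \<le> fst w \<and> fst w \<le> p1 \<and> q0 \<le> snd w \<and> snd w \<le> q1"
    and "(p0, q1) \<in> W" "(p1, q0) \<in> W" and k: "\<alpha> / (\<alpha> - 1) \<le> \<alpha> ^ k"
  shows "card W \<le> 2 * k + 3"
proof -
  have "0 < k"
    using pos_exponent_if_window[OF k] .
  consider "p1 \<le> Suc p0 \<and> q1 \<le> Suc q0" | "p0 = p1 \<or> q0 = q1"
    | "p0 < p1" "q0 < q1" "\<not> (p1 = Suc p0 \<and> q1 = Suc q0)"
    using assms(4) box by fastforce
  then show ?thesis
  proof cases
    case 1
    then have "card W \<le> 4"
      using box by (intro card_le_4_if_unit_box[of W p0 q0]) auto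
    then show ?thesis
      using \<open>0 < k\<close> by simp
  next
    case 2
    have "W \<subseteq> {(p0, q1), (p1, q0)}"
    proof
      fix w assume "w \<in> W"
      with 2 box have "pt w \<in> closed_segment (pt (p0, q1)) (pt (p1, q0))"
        by (cases w) (auto simp: closed_segment_commute pt_mem_column_segment pt_mem_row_segment)
      then show "w \<in> {(p0, q1), (p1, q0)}"
        using empty_polygon_segment[OF assms(2,4,5)] by blast
    qed
    then have "card W \<le> card {(p0, q1), (p1, q0)}"
      by (intro card_mono) auto
    also have "\<dots> \<le> 2"
      by (simp add: card_insert_if)
    finally have "card W \<le> 2" .
    then show ?thesis
      by simp
  next
    case 3
    interpret corner_polygon \<alpha> W p0 p1 q0 q1
      using assms 3 by unfold_locales auto
    show ?thesis
      using card_le[OF k 3(3)] .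
  qed
qed

text \<open>Otherwise the ray through \<open>pt (a0, b0)\<close> (resp. \<open>pt (M, N)\<close>) would put
  \<open>pt (a0 + 1, b0 + 1)\<close> (resp. \<open>pt (M - 1, N - 1)\<close>) inside a triangle of \<open>W\<close>.\<close>

lemma shallow_strip_below:
  assumes "empty_polygon W" "(a0, b0) \<in> W" "(M, N) \<in> W" "w \<in> W" "a0 \<le> fst w"
    and shallow: "N + a0 < M + b0" and "b0 < N"
  shows "snd w + a0 \<le> fst w + b0"
proof (rule ccontr)
  assume steep: "\<not> ?thesis"
  let ?p = "pt (a0, b0)"
  have "0 < snd ?p"
    using gt1 by (simp add: pt_def)
  moreover have "fst ?p * snd (pt (M, N)) \<le> snd ?p * fst (pt (M, N))"
    using shallow by (simp add: pt_def flip: power_add)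
  moreover have "snd ?p * fst (pt w) \<le> fst ?p * snd (pt w)"
    using steep by (simp add: pt_def flip: power_add)
  ultimately obtain e where e: "e \<in> closed_segment (pt (M, N)) (pt w)"
    and on_ray: "e = (snd e / snd ?p) *\<^sub>R ?p"
    by (rule ray_meets_closed_segment)
  have "snd e \<in> closed_segment (\<alpha> ^ N) (\<alpha> ^ snd w)"
    using linear_image_mem_closed_segment[OF linear_snd e] by (simp add: pt_def)
  moreover have "\<alpha> ^ Suc b0 \<le> \<alpha> ^ N" "\<alpha> ^ Suc b0 \<le> \<alpha> ^ snd w"
    using \<open>b0 < N\<close> steep assms(5) by (simp_all del: power_Suc)
  ultimately have "\<alpha> * snd ?p \<le> snd e"
    using closed_segment_real_bounds by (fastforce simp: pt_def)
  then have "\<alpha> \<le> snd e / snd ?p"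
    using \<open>0 < snd ?p\<close> by (simp add: pos_le_divide_eq)
  then have "\<alpha> \<in> closed_segment (snd e / snd ?p) 1"
    using gt1 by (auto simp: closed_segment_eq_real_ivl)
  then have "\<alpha> *\<^sub>R ?p \<in> closed_segment ?p e"
    using scaleR_mem_closed_segment on_ray by (metis closed_segment_commute)
  moreover have "\<alpha> *\<^sub>R ?p = pt (Suc a0, Suc b0)"
    by (simp add: pt_def)
  ultimately have "pt (Suc a0, Suc b0) \<in> closed_segment (pt (a0, b0)) e"
    by simp
  then have "(Suc a0, Suc b0) \<in> {(M, N), w, (a0, b0)}"
    by (rule empty_polygon_triangle[OF assms(1,3,4,2) e])
  then show False
    using shallow steep by auto
qed

lemma shallow_strip_above:
  assumes "empty_polygon W" "(a0, b0) \<in> W" "(M, N) \<in> W" "w \<in> W" "fst w \<le> M"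
    and shallow: "N + a0 < M + b0" and "b0 < N"
  shows "N + fst w \<le> M + snd w"
proof (rule ccontr)
  assume flat: "\<not> ?thesis"
  let ?p = "pt (M, N)"
  have "0 < snd ?p"
    using gt1 by (simp add: pt_def)
  moreover have "fst ?p * snd (pt w) \<le> snd ?p * fst (pt w)"
    using flat by (simp add: pt_def flip: power_add)
  moreover have "snd ?p * fst (pt (a0, b0)) \<le> fst ?p * snd (pt (a0, b0))"
    using shallow by (simp add: pt_def flip: power_add)
  ultimately obtain e where e: "e \<in> closed_segment (pt w) (pt (a0, b0))"
    and on_ray: "e = (snd e / snd ?p) *\<^sub>R ?p"
    by (rule ray_meets_closed_segment)
  have "snd e \<in> closed_segment (\<alpha> ^ snd w) (\<alpha> ^ b0)"
    using linear_image_mem_closed_segment[OF linear_snd e] by (simp add: pt_def)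
  then have "snd e \<le> max (\<alpha> ^ snd w) (\<alpha> ^ b0)" "min (\<alpha> ^ snd w) (\<alpha> ^ b0) \<le> snd e"
    using closed_segment_real_bounds by blast+
  moreover have "\<alpha> * \<alpha> ^ snd w \<le> \<alpha> ^ N" "\<alpha> * \<alpha> ^ b0 \<le> \<alpha> ^ N"
    using \<open>b0 < N\<close> flat assms(5) by (simp_all flip: power_Suc)
  then have "\<alpha> * max (\<alpha> ^ snd w) (\<alpha> ^ b0) \<le> snd ?p" "0 < min (\<alpha> ^ snd w) (\<alpha> ^ b0)"
    using gt1 by (simp_all add: pt_def max_def)
  ultimately have "\<alpha> * snd e \<le> snd ?p" "0 \<le> snd e"
    using mult_left_mono[of "snd e" "max (\<alpha> ^ snd w) (\<alpha> ^ b0)" \<alpha>] gt1 by linarith+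
  then have "snd e / snd ?p \<le> 1 / \<alpha>" "0 \<le> snd e / snd ?p"
    using gt1 \<open>0 < snd ?p\<close> by (simp_all add: field_simps)
  moreover have "1 / \<alpha> < 1"
    using gt1 by simp
  ultimately have "1 / \<alpha> \<in> closed_segment (snd e / snd ?p) 1"
    by (auto simp: closed_segment_eq_real_ivl)
  then have "(1 / \<alpha>) *\<^sub>R ?p \<in> closed_segment ?p e"
    using scaleR_mem_closed_segment on_ray by (metis closed_segment_commute)
  moreover have "(1 / \<alpha>) *\<^sub>R ?p = pt (M - 1, N - 1)"
    using gt1 shallow \<open>b0 < N\<close> by (simp add: pt_def power_diff)
  ultimately have "pt (M - 1, N - 1) \<in> closed_segment (pt (M, N)) e"
    by simp
  then have "(M - 1, N - 1) \<in> {w, (a0, b0), (M, N)}"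
    by (rule empty_polygon_triangle[OF assms(1,4,2,3) e])
  then show False
    using shallow flat \<open>b0 < N\<close> by auto
qed

lemma card_shallow_diagonal_corners:
  assumes "finite W" "empty_polygon W"
    and box: "\<forall>w\<in>W. a0 \<le> fst w \<and> fst w \<le> M \<and> b0 \<le> snd w \<and> snd w \<le> N"
    and "(a0, b0) \<in> W" "(M, N) \<in> W" and shallow: "N + a0 < M + b0" and "b0 < N"
    and k: "\<alpha> / (\<alpha> - 1) \<le> \<alpha> ^ k"
  shows "card W \<le> 2 * k + 3"
proof -
  have strip: "\<forall>w\<in>W. snd w + a0 \<le> fst w + b0 \<and> snd w \<le> N"
    using shallow_strip_below[OF assms(2,4,5) _ _ shallow \<open>b0 < N\<close>] box by blast
  have "\<forall>w\<in>W. N + fst w \<le> M + snd w"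
    using shallow_strip_above[OF assms(2,4,5) _ _ shallow \<open>b0 < N\<close>] box by blast
  then have "\<forall>w\<in>shear a0 b0 N ` W. 0 \<le> fst w \<and> fst w \<le> M + b0 - (N + a0) \<and>
      0 \<le> snd w \<and> snd w \<le> N - b0"
    using box by (auto simp: shear_def)
  moreover have "(0, N - b0) \<in> shear a0 b0 N ` W" "(M + b0 - (N + a0), 0) \<in> shear a0 b0 N ` W"
    using assms(4,5) by (force simp: shear_def)+
  ultimately have "card (shear a0 b0 N ` W) \<le> 2 * k + 3"
    using empty_polygon_shear[OF assms(1,2) strip] assms(1)
      card_anti_diagonal_corners[of "shear a0 b0 N ` W" 0 "M + b0 - (N + a0)" 0 "N - b0" k] k
    by blast
  then show ?thesis
    using card_image[OF inj_on_shear[OF strip]] by simp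
qed

lemma card_square_diagonal_corners:
  assumes "empty_polygon W"
    and box: "\<forall>w\<in>W. a0 \<le> fst w \<and> fst w \<le> M \<and> b0 \<le> snd w \<and> snd w \<le> N"
    and "(a0, b0) \<in> W" "(M, N) \<in> W" and square: "N + a0 = M + b0" and "a0 < M"
  shows "card W \<le> 4"
proof (cases "M = Suc a0")
  case True
  then show ?thesis
    using box square by (intro card_le_4_if_unit_box[of W a0 b0]) auto
next
  case False
  define t where "t = M - a0"
  have "2 \<le> t"
    using False \<open>a0 < M\<close> by (simp add: t_def)
  have "pt (M, N) = \<alpha> ^ t *\<^sub>R pt (a0, b0)"
    using \<open>a0 < M\<close> square by (simp add: t_def pt_def flip: power_add)
  moreover have "\<alpha> \<in> closed_segment (\<alpha> ^ t) 1"
    using \<open>2 \<le> t\<close> gt1 pow_le_pow_iff[of 1 t]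
    by (auto simp: closed_segment_eq_real_ivl simp del: pow_le_pow_iff)
  then have "\<alpha> *\<^sub>R pt (a0, b0) \<in> closed_segment (\<alpha> ^ t *\<^sub>R pt (a0, b0)) (pt (a0, b0))"
    by (rule scaleR_mem_closed_segment)
  moreover have "\<alpha> *\<^sub>R pt (a0, b0) = pt (Suc a0, Suc b0)"
    by (simp add: pt_def)
  ultimately have "pt (Suc a0, Suc b0) \<in> closed_segment (pt (M, N)) (pt (a0, b0))"
    by simp
  then have "(Suc a0, Suc b0) = (M, N) \<or> (Suc a0, Suc b0) = (a0, b0)"
    by (rule empty_polygon_segment[OF assms(1,4,3)])
  then show ?thesis
    using \<open>2 \<le> t\<close> by (auto simp: t_def)
qed

lemma card_diagonal_corners:
  assumes "finite W" "empty_polygon W"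
    and box: "\<forall>w\<in>W. a0 \<le> fst w \<and> fst w \<le> M \<and> b0 \<le> snd w \<and> snd w \<le> N"
    and diag: "(a0, b0) \<in> W" "(M, N) \<in> W" and "a0 < M" "b0 < N"
    and k: "\<alpha> / (\<alpha> - 1) \<le> \<alpha> ^ k"
  shows "card W \<le> 2 * k + 3"
proof -
  consider "N + a0 < M + b0" | "M + b0 < N + a0" | "N + a0 = M + b0"
    by linarith
  then show ?thesis
  proof cases
    case 1
    then show ?thesis
      using card_shallow_diagonal_corners[OF assms(1,2) box diag _ \<open>b0 < N\<close> k] by blast
  next
    case 2
    have "card (prod.swap ` W) \<le> 2 * k + 3"
    proof (rule card_shallow_diagonal_corners[OF _ empty_polygon_swap[OF assms(2)]])
      show "\<forall>w\<in>prod.swap ` W. b0 \<le> fst w \<and> fst w \<le> N \<and> a0 \<le> snd w \<and> snd w \<le> M"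
        using box by auto
      show "(b0, a0) \<in> prod.swap ` W" "(N, M) \<in> prod.swap ` W"
        using diag by force+
    qed (use assms(1) 2 \<open>a0 < M\<close> k in auto)
    then show ?thesis
      by (simp add: card_image)
  next
    case 3
    then have "card W \<le> 4"
      using card_square_diagonal_corners[OF assms(2) box diag] \<open>a0 < M\<close> by simp
    then show ?thesis
      using pos_exponent_if_window[OF k] by simp
  qed
qed

theorem card_empty_polygon_le:
  assumes "finite W" "empty_polygon W" and k: "\<alpha> / (\<alpha> - 1) \<le> \<alpha> ^ k"
  shows "card W \<le> 2 * k + 3"
proof (cases "W = {}")
  case False
  define a0 M b0 N where "a0 = Min (fst ` W)" "M = Max (fst ` W)"
    "b0 = Min (snd ` W)" "N = Max (snd ` W)"
  have box: "\<forall>w\<in>W. a0 \<le> fst w \<and> fst w \<le> M \<and> b0 \<le> snd w \<and> snd w \<le> N"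
    using assms(1) by (auto simp: a0_M_b0_N_def)
  have ext: "\<exists>w\<in>W. fst w = a0" "\<exists>w\<in>W. fst w = M" "\<exists>w\<in>W. snd w = b0" "\<exists>w\<in>W. snd w = N"
    using assms(1) False Min_in Max_in unfolding a0_M_b0_N_def
    by (metis (no_types, lifting) finite_imageI image_iff image_is_empty)+
  show ?thesis
  proof (cases "(a0, N) \<in> W \<and> (M, b0) \<in> W")
    case True
    then show ?thesis
      using card_anti_diagonal_corners[OF assms(1,2) box _ _ k] by blast
  next
    case False
    then have diag: "(a0, b0) \<in> W" "(M, N) \<in> W"
      using quadrant_free_opposite_corners[OF empty_polygon_quadrant_free[OF assms(2)] box ext]
      by blast+
    moreover have "a0 \<noteq> M" "b0 \<noteq> N"
      using False diag by auto
    then have "a0 < M" "b0 < N"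
      using box diag(1) by fastforce+
    ultimately show ?thesis
      using card_diagonal_corners[OF assms(1,2) box _ _ _ _ k] by blast
  qed
qed simp

lemma finite_L2_Int_bounded:
  assumes "bounded B"
  shows "finite (L2 \<alpha> \<inter> B)"
proof -
  obtain R where R: "\<And>x. x \<in> B \<Longrightarrow> norm x \<le> R"
    using assms by (auto simp: bounded_iff)
  obtain n where n: "R < \<alpha> ^ n"
    using real_arch_pow[OF gt1] by blast
  have "L2 \<alpha> \<inter> B \<subseteq> pt ` ({..<n} \<times> {..<n})"
  proof
    fix p assume p: "p \<in> L2 \<alpha> \<inter> B"
    then obtain w where w: "p = pt w"
      by (auto simp: L2_eq_range_pt)
    have "\<alpha> ^ fst w \<le> norm p" "\<alpha> ^ snd w \<le> norm p"
      using norm_fst_le[of "\<alpha> ^ fst w" "\<alpha> ^ snd w"] norm_snd_le[of "\<alpha> ^ snd w" "\<alpha> ^ fst w"] gt1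
      by (simp_all add: w pt_def)
    moreover have "norm p < \<alpha> ^ n"
      using R[of p] p n by simp
    ultimately have "\<alpha> ^ fst w < \<alpha> ^ n" "\<alpha> ^ snd w < \<alpha> ^ n"
      by linarith+
    then have "w \<in> {..<n} \<times> {..<n}"
      by (simp add: mem_Times_iff)
    then show "p \<in> pt ` ({..<n} \<times> {..<n})"
      using w by blast
  qed
  then show ?thesis
    by (rule finite_subset) simp
qed

lemma card_empty_lattice_polytope_le:
  assumes "finite Y" "Y \<subseteq> L2 \<alpha>" and convex_position: "\<forall>y\<in>Y. y \<notin> convex hull (Y - {y})"
    and empty: "convex hull Y \<inter> L2 \<alpha> \<subseteq> Y" and k: "\<alpha> / (\<alpha> - 1) \<le> \<alpha> ^ k"
  shows "card Y \<le> 2 * k + 3"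
proof -
  define W where "W = pt -` Y"
  have Y: "Y = pt ` W"
    using assms(2) by (auto simp: W_def L2_eq_range_pt)
  have "inj pt"
    by (simp add: inj_def)
  then have "finite W"
    unfolding W_def using assms(1) by (intro finite_vimageI)
  have "card Y = card W"
    unfolding Y using \<open>inj pt\<close> by (simp add: card_image inj_on_subset)
  have "empty_polygon W"
    unfolding empty_polygon_iff
  proof
    show "\<forall>w\<in>W. pt w \<notin> convex hull (pt ` (W - {w}))"
      using convex_position \<open>inj pt\<close> by (simp add: Y image_set_diff)
    show "\<forall>z. pt z \<in> convex hull (pt ` W) \<longrightarrow> z \<in> W"
    proof (intro allI impI)
      fix z assume "pt z \<in> convex hull (pt ` W)"
      then have "pt z \<in> convex hull Y \<inter> L2 \<alpha>"
        by (simp add: Y L2_eq_range_pt)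
      then show "z \<in> W"
        using empty by (auto simp: W_def)
    qed
  qed
  then show ?thesis
    using card_empty_polygon_le[OF \<open>finite W\<close> _ k] \<open>card Y = card W\<close> by simp
qed

theorem helly_prop_L2:
  assumes "\<alpha> / (\<alpha> - 1) \<le> \<alpha> ^ k"
  shows "helly_prop (L2 \<alpha>) (2 * k + 3)"
proof (rule helly_prop_if_empty_polytopes_bounded)
  show "finite (L2 \<alpha> \<inter> convex hull X)" if "finite X" for X
    using that by (intro finite_L2_Int_bounded compact_imp_bounded finite_imp_compact_convex_hull)
qed (use card_empty_lattice_polytope_le assms in auto)

end

lemma le_power_nat_ceiling_log:
  fixes b x :: real
  assumes "1 < b" "0 < x"
  shows "x \<le> b ^ nat \<lceil>log b x\<rceil>"
proof -
  have "x = b powr log b x"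
    using assms by simp
  also have "\<dots> \<le> b powr real (nat \<lceil>log b x\<rceil>)"
    using assms(1) by (intro powr_mono) linarith+
  also have "\<dots> = b ^ nat \<lceil>log b x\<rceil>"
    using assms(1) by (simp add: powr_realpow)
  finally show ?thesis .
qed

theorem theorem1:
  fixes \<alpha> :: real
  assumes "\<alpha> > 1"
  shows "helly_number (L2 \<alpha>) \<le> enat (nat (2 * \<lceil>log \<alpha> (\<alpha> / (\<alpha> - 1))\<rceil> + 3))"
proof -
  interpret exp_lattice \<alpha>
    using assms by unfold_locales
  define k where "k = nat \<lceil>log \<alpha> (\<alpha> / (\<alpha> - 1))\<rceil>"
  have "\<alpha> / (\<alpha> - 1) \<le> \<alpha> ^ k"
    unfolding k_def using assms by (intro le_power_nat_ceiling_log) auto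
  then have "helly_number (L2 \<alpha>) \<le> enat (2 * k + 3)"
    by (intro helly_number_le helly_prop_L2)
  moreover have "0 < log \<alpha> (\<alpha> / (\<alpha> - 1))"
    using assms by (simp add: field_simps)
  then have "0 \<le> \<lceil>log \<alpha> (\<alpha> / (\<alpha> - 1))\<rceil>"
    by simp
  ultimately show ?thesis
    by (simp add: k_def nat_add_distrib nat_mult_distrib)
qed

end
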